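(* For every subset $I$ of the positive integers, the relation $\leq_I$ is a partial order on the set of planar forests.
   Context: Planar rooted trees have their children linearly ordered left to right; a planar forest is a finite, possibly empty, sequence $t_1\cdots t_n$ of planar rooted trees. Orders on vertices: $s\geq_{high}s'$ iff $s'=s$ or $s'$ is an ancestor of $s$; for $\geq_{high}$-incomparable $s,s'$, $s\geq_{left}s'$ iff $s\in t_i,s'\in t_j$ with $i<j$, or both lie in $t_i$ and $s\geq_{left}s'$ in the forest obtained from $t_i$ by deleting its root (recursively); $s\geq_{h,l}s'$ iff $s\geq_{high}s'$ or $s\geq_{left}s'$ (a total order). Number the vertices of a forest $F$ of weight $n$ as $s_1\geq_{h,l}\cdots\geq_{h,l}s_n$. Admissible transformations: let $s$ be a vertex of $F$ which is the leftmost child of its parent $u$. (First kind) if $u$ is not a root, with parent $r$, detach the subtree rooted at $s$ and graft it as a child of $r$ placed immediately to the left of $u$; (second kind) if $u$ is a root, detach the subtree rooted at $s$ and insert it as a new tree of the forest immediately to the left of the tree of $u$. Everything else is unchanged. Such a transformation holds on $s$; it is a $j$-transformation if $s=s_j$. For $I$ a set of positive integers and forests $F,G$, $F\leq_I G$ iff there is a finite sequence $F=F_0,F_1,\dots,F_k=G$ ($k\geq0$) such that each $F_{i+1}$ is obtained from $F_i$ by a $j$-transformation for some $j\in I$. *)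

theory Defs
  imports Main
begin

text \<open>Planar rooted trees: a vertex with a (left-to-right ordered) list of children.
  A planar forest is a finite (possibly empty) list of planar rooted trees.\<close>
datatype ptree = Node "ptree list"

type_synonym pforest = "ptree list"

text \<open>Vertices of a forest are addressed by nonempty paths: the first entry is the
  index of the tree in the forest, each further entry is the index of a child.\<close>
fun is_vertex :: "pforest \<Rightarrow> nat list \<Rightarrow> bool" where
  "is_vertex ts [] = False"
| "is_vertex ts [i] = (i < length ts)"
| "is_vertex ts (i # j # p) = (i < length ts \<and> (case ts ! i of Node cs \<Rightarrow> is_vertex cs (j # p)))"

definition vertices :: "pforest \<Rightarrow> nat list set" where
  "vertices F = {s. is_vertex F s}"

definition weight :: "pforest \<Rightarrow> nat" where
  "weight F = card (vertices F)"

text \<open>s \<ge>_high s' iff s' = s or s' is an ancestor of s (i.e. the path of s' is a prefix of that of s).\<close>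
definition high_ge :: "nat list \<Rightarrow> nat list \<Rightarrow> bool" where
  "high_ge s s' = (\<exists>q. s = s' @ q)"

text \<open>s \<ge>_left s' (meaningful for \<ge>_high-incomparable vertices): s lies in an earlier tree,
  or both lie in the same tree and, recursively, s \<ge>_left s' in the forest obtained by
  deleting the root.\<close>
fun left_ge :: "nat list \<Rightarrow> nat list \<Rightarrow> bool" where
  "left_ge (i # p) (j # q) = (i < j \<or> (i = j \<and> left_ge p q))"
| "left_ge _ _ = False"

definition hl_ge :: "nat list \<Rightarrow> nat list \<Rightarrow> bool" where
  "hl_ge s s' = (high_ge s s' \<or> (\<not> high_ge s s' \<and> \<not> high_ge s' s \<and> left_ge s s'))"

text \<open>The j-th vertex s_j in the numbering s_1 \<ge>_{h,l} ... \<ge>_{h,l} s_n (1-indexed):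
  the vertex having exactly j-1 vertices strictly above it.\<close>
definition vertex_num :: "pforest \<Rightarrow> nat \<Rightarrow> nat list" where
  "vertex_num F j = (THE s. s \<in> vertices F \<and>
       card {s' \<in> vertices F. hl_ge s' s \<and> s' \<noteq> s} = j - 1)"

text \<open>Apply a function to the list of children of the vertex at path p
  (for p = [] to the list of trees of the forest itself).\<close>
fun modify_at :: "nat list \<Rightarrow> (pforest \<Rightarrow> pforest) \<Rightarrow> pforest \<Rightarrow> pforest" where
  "modify_at [] f ts = f ts"
| "modify_at (i # p) f ts = ts[i := (case ts ! i of Node cs \<Rightarrow> Node (modify_at p f cs))]"

text \<open>In a list of siblings cs, detach the leftmost child of cs!k (together with its subtree)
  and place it immediately to the left of cs!k.\<close>
definition promote :: "nat \<Rightarrow> pforest \<Rightarrow> pforest" where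
  "promote k cs = (case cs ! k of Node ds \<Rightarrow> take k cs @ [hd ds, Node (tl ds)] @ drop (Suc k) cs)"

text \<open>Admissible transformation holding on the vertex s: s is the leftmost child (index 0)
  of its parent u = r @ [k].  If r \<noteq> [] (u not a root, with parent r) this is the first
  kind; if r = [] (u is the root of the k-th tree) it is the second kind.\<close>
definition adm_trans :: "pforest \<Rightarrow> nat list \<Rightarrow> pforest \<Rightarrow> bool" where
  "adm_trans F s G = (s \<in> vertices F \<and>
     (\<exists>r k. s = r @ [k, 0] \<and> G = modify_at r (promote k) F))"

definition j_trans :: "nat \<Rightarrow> pforest \<Rightarrow> pforest \<Rightarrow> bool" where
  "j_trans j F G = (1 \<le> j \<and> j \<le> weight F \<and> adm_trans F (vertex_num F j) G)"

definition le_I :: "nat set \<Rightarrow> pforest \<Rightarrow> pforest \<Rightarrow> bool" where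
  "le_I I = (\<lambda>F G. \<exists>j\<in>I. j_trans j F G)\<^sup>*\<^sup>*"

end

theory Submission
  imports Defs
begin

text \<open>Each admissible transformation moves a whole subtree one level up and leaves everything
  else in place, so it lowers the sum of the depths of all vertices by the (positive) size of that
  subtree. A relation whose steps strictly decrease a natural-number potential has an acyclic
  reflexive-transitive closure, and a reflexive-transitive closure is always a preorder.\<close>

lemma partial_order_rtrancl_if_decreasing:
  fixes f :: "'a \<Rightarrow> nat"
  assumes "\<And>x y. (x, y) \<in> r \<Longrightarrow> f y < f x"
  shows "partial_order_on UNIV (r\<^sup>*)"
proof -
  have "r\<inverse> \<subseteq> measure f" using assms by auto
  then have "wf (r\<inverse>)" by (rule wf_subset[OF wf_measure])
  then have "acyclic r" using wf_acyclic by fastforce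
  then show ?thesis
    unfolding partial_order_on_def preorder_on_def
    by (simp add: refl_rtrancl trans_rtrancl acyclic_impl_antisym_rtrancl)
qed

fun children :: "ptree \<Rightarrow> pforest" where
  "children (Node cs) = cs"

fun tree_size :: "ptree \<Rightarrow> nat" where
  "tree_size (Node cs) = Suc (\<Sum>c\<leftarrow>cs. tree_size c)"

text \<open>Sum over all vertices of their depth below the root.\<close>
fun depth_sum :: "ptree \<Rightarrow> nat" where
  "depth_sum (Node cs) = (\<Sum>c\<leftarrow>cs. depth_sum c + tree_size c)"

definition forest_size :: "pforest \<Rightarrow> nat" where
  "forest_size ts = (\<Sum>t\<leftarrow>ts. tree_size t)"

definition forest_depth_sum :: "pforest \<Rightarrow> nat" where
  "forest_depth_sum ts = (\<Sum>t\<leftarrow>ts. depth_sum t)"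

lemma depth_sum_Node: "depth_sum (Node cs) = forest_depth_sum cs + forest_size cs"
  unfolding forest_depth_sum_def forest_size_def by (induct cs) auto

lemma tree_size_Node: "tree_size (Node cs) = Suc (forest_size cs)"
  by (simp add: forest_size_def)

lemma tree_size_pos: "0 < tree_size t"
  by (cases t) simp

lemma is_vertex_Cons:
  "q \<noteq> [] \<Longrightarrow> is_vertex ts (i # q) \<longleftrightarrow> i < length ts \<and> is_vertex (children (ts ! i)) q"
  by (cases q; cases "ts ! i") auto

lemma promote_size_depth_sum:
  assumes "k < length cs" "children (cs ! k) \<noteq> []"
  shows "forest_size (promote k cs) = forest_size cs"
    and "forest_depth_sum (promote k cs) < forest_depth_sum cs"
proof -
  obtain h t where k: "cs ! k = Node (h # t)"
    using assms(2) by (cases "cs ! k" rule: children.cases) (auto simp: neq_Nil_conv)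
  have cs: "cs = take k cs @ Node (h # t) # drop (Suc k) cs"
    using id_take_nth_drop[OF assms(1)] unfolding k .
  have promote: "promote k cs = take k cs @ h # Node t # drop (Suc k) cs"
    unfolding promote_def using k by simp
  show "forest_size (promote k cs) = forest_size cs"
    unfolding forest_size_def promote by (subst (2) cs) simp
  show "forest_depth_sum (promote k cs) < forest_depth_sum cs"
    unfolding forest_depth_sum_def promote
    by (subst (2) cs) (simp add: tree_size_pos)
qed

lemma forest_size_list_update:
  "i < length ts \<Longrightarrow> tree_size t = tree_size (ts ! i) \<Longrightarrow> forest_size (ts[i := t]) = forest_size ts"
  unfolding forest_size_def by (simp add: map_update sum_list_update)

lemma forest_depth_sum_list_update_less:
  assumes "i < length ts" "depth_sum t < depth_sum (ts ! i)"
  shows "forest_depth_sum (ts[i := t]) < forest_depth_sum ts"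
proof -
  have "depth_sum (ts ! i) \<le> forest_depth_sum ts"
    unfolding forest_depth_sum_def using assms(1) elem_le_sum_list[of i "map depth_sum ts"] by simp
  with assms show ?thesis
    unfolding forest_depth_sum_def by (simp add: map_update sum_list_update)
qed

lemma modify_at_promote_size_depth_sum:
  assumes "is_vertex F (r @ [k, 0])"
  shows "forest_size (modify_at r (promote k) F) = forest_size F
    \<and> forest_depth_sum (modify_at r (promote k) F) < forest_depth_sum F"
  using assms
proof (induction r arbitrary: F)
  case Nil
  then have "k < length F" "children (F ! k) \<noteq> []"
    by (auto simp: is_vertex_Cons split: ptree.splits)
  then show ?case by (simp add: promote_size_depth_sum)
next
  case (Cons i p)
  obtain cs where i: "F ! i = Node cs" by (cases "F ! i")
  then have "i < length F" and "is_vertex cs (p @ [k, 0])"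
    using Cons.prems is_vertex_Cons[of "p @ [k, 0]" F i] by auto
  moreover note Cons.IH[OF this(2)]
  ultimately have "tree_size (Node (modify_at p (promote k) cs)) = tree_size (F ! i)"
    and "depth_sum (Node (modify_at p (promote k) cs)) < depth_sum (F ! i)"
    unfolding i tree_size_Node depth_sum_Node by simp_all
  moreover have "modify_at (i # p) (promote k) F = F[i := Node (modify_at p (promote k) cs)]"
    using i by simp
  ultimately show ?case
    using \<open>i < length F\<close> by (simp add: forest_size_list_update forest_depth_sum_list_update_less)
qed

lemma j_trans_forest_depth_sum_less: "j_trans j F G \<Longrightarrow> forest_depth_sum G < forest_depth_sum F"
  unfolding j_trans_def adm_trans_def vertices_def
  using modify_at_promote_size_depth_sum by auto

theorem proposition27:
  fixes I :: "nat set"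
  assumes "0 \<notin> I"
  shows "partial_order_on UNIV {(F, G). le_I I F G}"
proof -
  let ?step = "{(F, G). \<exists>j\<in>I. j_trans j F G}"
  have "{(F, G). le_I I F G} = ?step\<^sup>*"
    unfolding le_I_def by (simp add: rtranclp_rtrancl_eq)
  moreover have "partial_order_on UNIV (?step\<^sup>*)"
    by (rule partial_order_rtrancl_if_decreasing[where f = forest_depth_sum])
      (auto intro: j_trans_forest_depth_sum_less)
  ultimately show ?thesis by simp
qed

end
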